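(* Let $L:\mathbb{R}^n\to\mathbb{R}$ be $\mathcal{C}^1$, convex, with a unique minimizer $z_1^*$, $L^*=L(z_1^* )$. Let $\lambda>0$, $\gamma>0$, and let $\psi>0$ be such that $\nu:=\psi(\psi-\lambda)<0$. Define $$V(z):=\gamma(L(z_1)-L^* )+\tfrac12|\psi(z_1-z_1^* )+z_2|^2+\tfrac{\nu}{2}|z_1-z_1^*|^2,\quad z=(z_1,z_2)\in\mathbb{R}^{2n},$$ and let $\dot V(z):=\langle\nabla V(z),(z_2,-\lambda z_2-\gamma\nabla L(z_1))\rangle$. Then for each $z\in\mathbb{R}^{2n}$, $$\dot V(z)\le-\psi\big(a(z_1)+2\nu c(z_1)\big)+2(\psi-\lambda)b(z),$$ where $a(z_1):=\gamma(L(z_1)-L^* )$, $b(z):=\tfrac12|\psi(z_1-z_1^* )+z_2|^2$, $c(z_1):=\tfrac12|z_1-z_1^*|^2$.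
   Context: Convexity means $L(u)\ge L(w)+\langle\nabla L(w),u-w\rangle$ for all $u,w$. *)

theory Defs
  imports "HOL-Analysis.Analysis"
begin

definition lyapV :: "('a::euclidean_space \<Rightarrow> real) \<Rightarrow> 'a \<Rightarrow> real \<Rightarrow> real \<Rightarrow> real \<Rightarrow> 'a \<times> 'a \<Rightarrow> real" where
  "lyapV L zs \<gamma> \<psi> \<nu> z =
     \<gamma> * (L (fst z) - L zs) + (1/2) * (norm (\<psi> *\<^sub>R (fst z - zs) + snd z))^2
     + (\<nu>/2) * (norm (fst z - zs))^2"

definition lyapVdot :: "('a::euclidean_space \<Rightarrow> real) \<Rightarrow> ('a \<Rightarrow> 'a) \<Rightarrow> 'a \<Rightarrow> real \<Rightarrow> real \<Rightarrow> real \<Rightarrow> real \<Rightarrow> 'a \<times> 'a \<Rightarrow> real" where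
  "lyapVdot L gL zs lam \<gamma> \<psi> \<nu> z =
     frechet_derivative (lyapV L zs \<gamma> \<psi> \<nu>) (at z)
       (snd z, - (lam *\<^sub>R snd z) - \<gamma> *\<^sub>R gL (fst z))"

end

theory Submission
  imports Defs
begin

text \<open>Along the flow the derivative of \<open>V\<close> splits into a gradient term
  \<open>-\<gamma>\<psi> \<langle>\<nabla>L(z\<^sub>1), z\<^sub>1 - z\<^sub>1\<^sup>*\<rangle>\<close>, the term \<open>(\<psi> - \<lambda>)|w|\<^sup>2\<close> with
  \<open>w = \<psi>(z\<^sub>1 - z\<^sub>1\<^sup>*) + z\<^sub>2\<close>, a cross term \<open>(\<nu> - \<psi>(\<psi> - \<lambda>))\<langle>z\<^sub>1 - z\<^sub>1\<^sup>*, w\<rangle>\<close>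
  and \<open>-\<nu>\<psi>|z\<^sub>1 - z\<^sub>1\<^sup>*|\<^sup>2\<close>. The choice \<open>\<nu> = \<psi>(\<psi> - \<lambda>)\<close> removes the cross
  term, and the first-order characterisation of convexity,
  \<open>L\<^sup>* \<ge> L(z\<^sub>1) + \<langle>\<nabla>L(z\<^sub>1), z\<^sub>1\<^sup>* - z\<^sub>1\<rangle>\<close>, bounds the gradient term by
  \<open>-\<gamma>\<psi>(L(z\<^sub>1) - L\<^sup>*)\<close>.\<close>

lemma convex_on_UNIV_along_line:
  fixes f :: "'a::real_vector \<Rightarrow> real"
  assumes "convex_on UNIV f"
  shows "convex_on UNIV (\<lambda>t::real. f (x + t *\<^sub>R v))"
proof (rule convex_onI)
  fix u s t :: real
  assume "0 < u" "u < 1"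
  have "x + ((1 - u) * s + u * t) *\<^sub>R v = (1 - u) *\<^sub>R (x + s *\<^sub>R v) + u *\<^sub>R (x + t *\<^sub>R v)"
    by (simp add: algebra_simps)
  then show "f (x + ((1 - u) *\<^sub>R s + u *\<^sub>R t) *\<^sub>R v) \<le> (1 - u) * f (x + s *\<^sub>R v) + u * f (x + t *\<^sub>R v)"
    using convex_onD[OF assms, of u "x + s *\<^sub>R v" "x + t *\<^sub>R v"] \<open>0 < u\<close> \<open>u < 1\<close> by simp
qed simp

lemma convex_on_UNIV_above_tangent:
  fixes f :: "'a::real_normed_vector \<Rightarrow> real"
  assumes cvx: "convex_on UNIV f"
    and deriv: "(f has_derivative f') (at x)"
  shows "f y - f x \<ge> f' (y - x)"
proof -
  define g where "g = (\<lambda>t::real. f (x + t *\<^sub>R (y - x)))"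
  have "((\<lambda>t::real. x + t *\<^sub>R (y - x)) has_derivative (\<lambda>t. t *\<^sub>R (y - x))) (at 0)"
    by (auto intro!: derivative_eq_intros)
  from has_derivative_compose[OF this] deriv
  have "(g has_derivative (\<lambda>t. f' (t *\<^sub>R (y - x)))) (at 0)"
    by (simp add: g_def)
  moreover have "linear f'"
    using deriv has_derivative_linear by blast
  ultimately have "(g has_field_derivative f' (y - x)) (at 0)"
    by (simp add: has_field_derivative_def linear_scale mult_commute_abs)
  moreover have "convex_on UNIV g"
    unfolding g_def by (rule convex_on_UNIV_along_line[OF cvx])
  ultimately have "g 1 - g 0 \<ge> f' (y - x) * (1 - 0)"
    by (intro convex_on_imp_above_tangent) auto
  then show ?thesis
    by (simp add: g_def)
qed

lemma lyapV_has_derivative: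
  fixes L :: "'a::euclidean_space \<Rightarrow> real"
  assumes "(L has_derivative (\<lambda>h. g \<bullet> h)) (at (fst z))"
  shows "(lyapV L zs \<gamma> \<psi> \<nu> has_derivative
      (\<lambda>(h\<^sub>1, h\<^sub>2). \<gamma> * (g \<bullet> h\<^sub>1) + (\<psi> *\<^sub>R (fst z - zs) + snd z) \<bullet> (\<psi> *\<^sub>R h\<^sub>1 + h\<^sub>2)
                 + \<nu> * ((fst z - zs) \<bullet> h\<^sub>1))) (at z)"
proof -
  have "((\<lambda>p. L (fst p)) has_derivative (\<lambda>h. g \<bullet> fst h)) (at z)"
    using has_derivative_compose[OF has_derivative_fst[OF has_derivative_ident] assms]
    by (simp add: o_def)
  then show ?thesis
    unfolding lyapV_def[abs_def] power2_norm_eq_inner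
    by (auto intro!: derivative_eq_intros
        simp: fun_eq_iff inner_add_left inner_add_right inner_diff_left inner_diff_right
              inner_commute field_simps)
qed

lemma lyapVdot_eq:
  fixes L :: "'a::euclidean_space \<Rightarrow> real" and zs :: 'a and z :: "'a \<times> 'a"
    and \<psi> :: real
  assumes "\<And>x. (L has_derivative (\<lambda>h. gL x \<bullet> h)) (at x)"
  defines "x \<equiv> fst z - zs" and "w \<equiv> \<psi> *\<^sub>R (fst z - zs) + snd z"
  shows "lyapVdot L gL zs lam \<gamma> \<psi> \<nu> z
    = - \<gamma> * \<psi> * (gL (fst z) \<bullet> x) + (\<psi> - lam) * norm w ^ 2
      + (\<nu> - \<psi> * (\<psi> - lam)) * (x \<bullet> w) - \<nu> * \<psi> * norm x ^ 2"
proof -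
  have v: "snd z = w - \<psi> *\<^sub>R x"
    by (simp add: x_def w_def)
  have "(lyapV L zs \<gamma> \<psi> \<nu> has_derivative
      (\<lambda>(h\<^sub>1, h\<^sub>2). \<gamma> * (gL (fst z) \<bullet> h\<^sub>1) + w \<bullet> (\<psi> *\<^sub>R h\<^sub>1 + h\<^sub>2) + \<nu> * (x \<bullet> h\<^sub>1))) (at z)"
    unfolding x_def w_def by (rule lyapV_has_derivative[OF assms(1)])
  then have "lyapVdot L gL zs lam \<gamma> \<psi> \<nu> z
      = \<gamma> * (gL (fst z) \<bullet> snd z) + w \<bullet> (\<psi> *\<^sub>R snd z + (- (lam *\<^sub>R snd z) - \<gamma> *\<^sub>R gL (fst z)))
        + \<nu> * (x \<bullet> snd z)"
    by (simp add: lyapVdot_def frechet_derivative_at[symmetric])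
  then show ?thesis
    unfolding v by (simp add: power2_norm_eq_inner inner_add_left inner_add_right inner_diff_left
        inner_diff_right inner_commute algebra_simps)
qed

theorem lemma5p2:
  fixes L :: "'a::euclidean_space \<Rightarrow> real"
    and gL :: "'a \<Rightarrow> 'a"
    and zs :: 'a
    and lam \<gamma> \<psi> :: real
    and z :: "'a \<times> 'a"
  assumes grad: "\<And>x. (L has_derivative (\<lambda>h. gL x \<bullet> h)) (at x)"
    and C1: "continuous_on UNIV gL"
    and cvx: "convex_on UNIV L"
    and minim: "\<And>x. L zs \<le> L x"
    and uniq: "\<And>x. L x = L zs \<Longrightarrow> x = zs"
    and lam: "lam > 0" and gam: "\<gamma> > 0" and psi: "\<psi> > 0"
    and nu: "\<psi> * (\<psi> - lam) < 0"
  shows "lyapVdot L gL zs lam \<gamma> \<psi> (\<psi> * (\<psi> - lam)) z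
     \<le> - \<psi> * (\<gamma> * (L (fst z) - L zs)
               + 2 * (\<psi> * (\<psi> - lam)) * ((1/2) * (norm (fst z - zs))^2))
       + 2 * (\<psi> - lam) * ((1/2) * (norm (\<psi> *\<^sub>R (fst z - zs) + snd z))^2)"
proof -
  have "L (fst z) - L zs \<le> gL (fst z) \<bullet> (fst z - zs)"
    using convex_on_UNIV_above_tangent[OF cvx grad, of "fst z" zs] by (simp add: inner_diff_right)
  then have "\<gamma> * \<psi> * (L (fst z) - L zs) \<le> \<gamma> * \<psi> * (gL (fst z) \<bullet> (fst z - zs))"
    using gam psi by (simp add: mult_left_mono)
  then show ?thesis
    unfolding lyapVdot_eq[OF grad] by (simp add: field_simps)
qed

end
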